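(* Let $n\ge1$ and let $(f_3,\pi_1,\pi_2)$ be a triple where $f_3$ is a pairing of $[n]\cup[\hat n]$, $\pi_1,\pi_2$ are set partitions of $[n]\cup[\hat n]$ with blocks of even size, $\pi_1$ stable by $f_1$ and $f_3$, and $\pi_2$ stable by $f_2$ and $f_3$. Consider the graph whose vertices are the blocks of $\pi_1$ ("white") and the blocks of $\pi_2$ ("black"), in which: each black block $B$ is joined as a child to the white block containing the maximum hat number of $B$; and each white block $W$ not containing $1$ is joined as a child to the black block containing the maximum non-hat number of $W$. Then this parent/child structure is a tree rooted at the white block containing $1$.
   Context: The ground set is $[n]\cup[\hat n]=\{1,\dots,n,\hat1,\dots,\hat n\}$, with non-hat numbers ordered $1<2<\dots<n$ and hat numbers ordered $\hat1<\hat2<\dots<\hat n$. A pairing is a fixed-point-free involution. $f_1=(1\,\hat n)(2\,\hat1)(3\,\hat2)\cdots(n\,\widehat{n-1})$ and $f_2=(1\,\hat1)(2\,\hat2)\cdots(n\,\hat n)$. A set partition is stable by a permutation $f$ if $f$ maps each block onto itself. *)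

theory Defs
  imports Main "HOL-Library.Disjoint_Sets"
begin

text \<open>Points of the ground set: N i is the non-hat number i, H i is the hat number \<hat>i.\<close>
datatype pt = N nat | H nat

definition ground :: "nat \<Rightarrow> pt set" where
  "ground n = N ` {1..n} \<union> H ` {1..n}"

fun f1 :: "nat \<Rightarrow> pt \<Rightarrow> pt" where
  "f1 n (N i) = (if i = 1 then H n else H (i - 1))"
| "f1 n (H i) = (if i = n then N 1 else N (i + 1))"

fun f2 :: "pt \<Rightarrow> pt" where
  "f2 (N i) = H i"
| "f2 (H i) = N i"

definition is_pairing :: "nat \<Rightarrow> (pt \<Rightarrow> pt) \<Rightarrow> bool" where
  "is_pairing n f \<longleftrightarrow>
     (\<forall>x\<in>ground n. f x \<in> ground n \<and> f (f x) = x \<and> f x \<noteq> x)"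

definition stable_by :: "(pt \<Rightarrow> pt) \<Rightarrow> pt set set \<Rightarrow> bool" where
  "stable_by f P \<longleftrightarrow> (\<forall>B\<in>P. f ` B = B)"

definition even_blocks :: "pt set set \<Rightarrow> bool" where
  "even_blocks P \<longleftrightarrow> (\<forall>B\<in>P. even (card B))"

definition max_hat :: "pt set \<Rightarrow> nat" where
  "max_hat B = Max {i. H i \<in> B}"

definition max_nonhat :: "pt set \<Rightarrow> nat" where
  "max_nonhat B = Max {i. N i \<in> B}"

definition block_of :: "pt set set \<Rightarrow> pt \<Rightarrow> pt set" where
  "block_of P x = (THE B. B \<in> P \<and> x \<in> B)"

text \<open>Vertices: Inl W for white blocks (of \<pi>1), Inr B for black blocks (of \<pi>2).\<close>
definition tree_vertices :: "pt set set \<Rightarrow> pt set set \<Rightarrow> (pt set + pt set) set" where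
  "tree_vertices \<pi>1 \<pi>2 = Inl ` \<pi>1 \<union> Inr ` \<pi>2"

definition child_parent :: "pt set set \<Rightarrow> pt set set \<Rightarrow> ((pt set + pt set) \<times> (pt set + pt set)) set" where
  "child_parent \<pi>1 \<pi>2 =
     {(Inr B, Inl (block_of \<pi>1 (H (max_hat B)))) | B. B \<in> \<pi>2} \<union>
     {(Inl W, Inr (block_of \<pi>2 (N (max_nonhat W)))) | W. W \<in> \<pi>1 \<and> N 1 \<notin> W}"

definition tree_root :: "pt set set \<Rightarrow> pt set + pt set" where
  "tree_root \<pi>1 = Inl (block_of \<pi>1 (N 1))"

end

theory Submission
  imports Defs
begin

text \<open>Going from a black block \<open>B\<close> to its parent \<open>W\<close> and on to the parent \<open>B'\<close> of \<open>W\<close> strictly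
  increases the maximal hat number: \<open>W\<close> contains \<open>\<hat>m\<close> for \<open>m\<close> the maximal hat of \<open>B\<close>, so by
  \<open>f\<^sub>1\<close>-stability it contains \<open>1\<close> (then \<open>W\<close> is the root) or \<open>m + 1\<close>; in the latter case the
  maximal non-hat \<open>k \<ge> m + 1\<close> of \<open>W\<close> lies in \<open>B'\<close>, and \<open>f\<^sub>2\<close>-stability puts \<open>\<hat>k\<close> into \<open>B'\<close>.
  As hat numbers are bounded by \<open>n\<close>, every ancestor chain reaches the root.\<close>

lemma block_of_eq:
  assumes "partition_on A P" "B \<in> P" "x \<in> B"
  shows "block_of P x = B"
  unfolding block_of_def
proof (rule the_equality)
  show "B \<in> P \<and> x \<in> B" using assms by auto
  fix C assume "C \<in> P \<and> x \<in> C"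
  then show "C = B" using assms partition_onD2[OF assms(1)]
    by (meson disjointD disjoint_iff)
qed

lemma
  assumes "partition_on A P" "x \<in> A"
  shows block_of_in_partition: "block_of P x \<in> P"
    and mem_block_of: "x \<in> block_of P x"
proof -
  obtain B where "B \<in> P" "x \<in> B" using assms partition_onD1[OF assms(1)] by auto
  then show "block_of P x \<in> P" "x \<in> block_of P x"
    using block_of_eq[OF assms(1)] by simp_all
qed

lemma stable_by_mem: "stable_by f P \<Longrightarrow> B \<in> P \<Longrightarrow> x \<in> B \<Longrightarrow> f x \<in> B"
  unfolding stable_by_def by blast

lemma
  assumes "B \<subseteq> ground n" "H j \<in> B"
  shows max_hat_mem: "H (max_hat B) \<in> B"
    and le_max_hat: "j \<le> max_hat B"
proof -
  have "finite {i. H i \<in> B}"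
    by (rule finite_subset[of _ "{1..n}"]) (use assms(1) in \<open>auto simp: ground_def\<close>)
  then show "H (max_hat B) \<in> B" "j \<le> max_hat B"
    unfolding max_hat_def using Max_in[of "{i. H i \<in> B}"] assms(2) by auto
qed

lemma
  assumes "B \<subseteq> ground n" "N j \<in> B"
  shows max_nonhat_mem: "N (max_nonhat B) \<in> B"
    and le_max_nonhat: "j \<le> max_nonhat B"
proof -
  have "finite {i. N i \<in> B}"
    by (rule finite_subset[of _ "{1..n}"]) (use assms(1) in \<open>auto simp: ground_def\<close>)
  then show "N (max_nonhat B) \<in> B" "j \<le> max_nonhat B"
    unfolding max_nonhat_def using Max_in[of "{i. N i \<in> B}"] assms(2) by auto
qed

lemma H_in_ground_le: "H i \<in> ground n \<Longrightarrow> i \<le> n"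
  unfolding ground_def by auto

locale bicoloured_blocks =
  fixes n :: nat and \<pi>1 \<pi>2 :: "pt set set"
  assumes n_pos: "n \<ge> 1"
    and partition1: "partition_on (ground n) \<pi>1"
    and partition2: "partition_on (ground n) \<pi>2"
    and stable1: "stable_by (f1 n) \<pi>1"
    and stable2: "stable_by f2 \<pi>2"
begin

lemma white_block_subset_ground: "W \<in> \<pi>1 \<Longrightarrow> W \<subseteq> ground n"
  using partition_onD1[OF partition1] by blast

lemma black_block_subset_ground: "B \<in> \<pi>2 \<Longrightarrow> B \<subseteq> ground n"
  using partition_onD1[OF partition2] by blast

lemma black_block_has_hat:
  assumes "B \<in> \<pi>2"
  shows "\<exists>j. H j \<in> B"
proof -
  obtain x where "x \<in> B" using partition_onD3[OF partition2] assms by fastforce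
  then show ?thesis using stable_by_mem[OF stable2 assms] by (cases x) force+
qed

lemma white_block_has_nonhat:
  assumes "W \<in> \<pi>1"
  shows "\<exists>j. N j \<in> W"
proof -
  obtain x where "x \<in> W" using partition_onD3[OF partition1] assms by fastforce
  then show ?thesis using stable_by_mem[OF stable1 assms, of x]
    by (cases x) (auto split: if_splits)
qed

lemma max_hat_in_black_block:
  assumes "B \<in> \<pi>2"
  shows "H (max_hat B) \<in> B"
proof -
  obtain j where "H j \<in> B" using black_block_has_hat[OF assms] ..
  then show ?thesis using max_hat_mem black_block_subset_ground[OF assms] by blast
qed

lemma max_nonhat_in_white_block:
  assumes "W \<in> \<pi>1"
  shows "N (max_nonhat W) \<in> W"
proof -
  obtain j where "N j \<in> W" using white_block_has_nonhat[OF assms] ..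
  then show ?thesis using max_nonhat_mem white_block_subset_ground[OF assms] by blast
qed

lemma white_parent_mem: "B \<in> \<pi>2 \<Longrightarrow> H (max_hat B) \<in> block_of \<pi>1 (H (max_hat B))"
  using mem_block_of[OF partition1] max_hat_in_black_block black_block_subset_ground by blast

lemma white_parent_in_partition: "B \<in> \<pi>2 \<Longrightarrow> block_of \<pi>1 (H (max_hat B)) \<in> \<pi>1"
  using block_of_in_partition[OF partition1] max_hat_in_black_block black_block_subset_ground
  by blast

lemma black_parent_mem: "W \<in> \<pi>1 \<Longrightarrow> N (max_nonhat W) \<in> block_of \<pi>2 (N (max_nonhat W))"
  using mem_block_of[OF partition2] max_nonhat_in_white_block white_block_subset_ground by blast

lemma black_parent_in_partition: "W \<in> \<pi>1 \<Longrightarrow> block_of \<pi>2 (N (max_nonhat W)) \<in> \<pi>2"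
  using block_of_in_partition[OF partition2] max_nonhat_in_white_block white_block_subset_ground
  by blast

lemma hat_lt_max_nonhat:
  assumes "W \<in> \<pi>1" "H m \<in> W" "N 1 \<notin> W"
  shows "m < max_nonhat W"
proof -
  have "f1 n (H m) \<in> W" using stable_by_mem[OF stable1 assms(1,2)] .
  with assms(3) have "N (m + 1) \<in> W" by (auto split: if_splits)
  then show ?thesis using le_max_nonhat[OF white_block_subset_ground[OF assms(1)]] by fastforce
qed

lemma nonhat_le_max_hat:
  assumes "B \<in> \<pi>2" "N k \<in> B"
  shows "k \<le> max_hat B"
proof -
  have "H k \<in> B" using stable_by_mem[OF stable2 assms] by simp
  then show ?thesis by (rule le_max_hat[OF black_block_subset_ground[OF assms(1)]])
qed

lemma max_hat_le: "B \<in> \<pi>2 \<Longrightarrow> max_hat B \<le> n"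
  using max_hat_in_black_block black_block_subset_ground H_in_ground_le by blast

lemma root_block: "W \<in> \<pi>1 \<Longrightarrow> N 1 \<in> W \<Longrightarrow> Inl W = tree_root \<pi>1"
  unfolding tree_root_def using block_of_eq[OF partition1] by metis

lemma tree_root_in_vertices: "tree_root \<pi>1 \<in> tree_vertices \<pi>1 \<pi>2"
proof -
  have "N 1 \<in> ground n" using n_pos unfolding ground_def by auto
  then show ?thesis unfolding tree_root_def tree_vertices_def
    using block_of_in_partition[OF partition1] by blast
qed

lemma child_parent_subset_vertices:
  "child_parent \<pi>1 \<pi>2 \<subseteq> tree_vertices \<pi>1 \<pi>2 \<times> tree_vertices \<pi>1 \<pi>2"
  unfolding child_parent_def tree_vertices_def
  using white_parent_in_partition black_parent_in_partition by blast

lemma black_reaches_root: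
  assumes "B \<in> \<pi>2"
  shows "(Inr B, tree_root \<pi>1) \<in> (child_parent \<pi>1 \<pi>2)\<^sup>*"
  using assms
proof (induction "n - max_hat B" arbitrary: B rule: less_induct)
  case less
  define W where "W = block_of \<pi>1 (H (max_hat B))"
  have W: "W \<in> \<pi>1" "H (max_hat B) \<in> W"
    unfolding W_def using white_parent_in_partition white_parent_mem less.prems by blast+
  have B_W: "(Inr B, Inl W) \<in> child_parent \<pi>1 \<pi>2"
    unfolding child_parent_def W_def using less.prems by blast
  show ?case
  proof (cases "N 1 \<in> W")
    case True
    then show ?thesis using B_W root_block[OF W(1)] by auto
  next
    case False
    define B' where "B' = block_of \<pi>2 (N (max_nonhat W))"
    have B': "B' \<in> \<pi>2" "N (max_nonhat W) \<in> B'"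
      unfolding B'_def using black_parent_in_partition black_parent_mem W(1) by blast+
    have W_B': "(Inl W, Inr B') \<in> child_parent \<pi>1 \<pi>2"
      unfolding child_parent_def B'_def using W(1) False by blast
    have "max_hat B < max_nonhat W" using hat_lt_max_nonhat W False .
    also have "\<dots> \<le> max_hat B'" using nonhat_le_max_hat B' .
    finally have "n - max_hat B' < n - max_hat B" using max_hat_le[OF B'(1)] by linarith
    then have "(Inr B', tree_root \<pi>1) \<in> (child_parent \<pi>1 \<pi>2)\<^sup>*" using less.hyps B'(1) by blast
    then show ?thesis using B_W W_B' by (meson converse_rtrancl_into_rtrancl)
  qed
qed

lemma white_reaches_root:
  assumes "W \<in> \<pi>1"
  shows "(Inl W, tree_root \<pi>1) \<in> (child_parent \<pi>1 \<pi>2)\<^sup>*"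
proof (cases "N 1 \<in> W")
  case True
  then show ?thesis using root_block[OF assms] by auto
next
  case False
  then have "(Inl W, Inr (block_of \<pi>2 (N (max_nonhat W)))) \<in> child_parent \<pi>1 \<pi>2"
    unfolding child_parent_def using assms by blast
  then show ?thesis
    using black_reaches_root[OF black_parent_in_partition[OF assms]]
    by (meson converse_rtrancl_into_rtrancl)
qed

end

theorem lemma3:
  fixes n :: nat and f3 :: "pt \<Rightarrow> pt" and \<pi>1 \<pi>2 :: "pt set set"
  assumes "n \<ge> 1"
    and "is_pairing n f3"
    and "partition_on (ground n) \<pi>1" and "partition_on (ground n) \<pi>2"
    and "even_blocks \<pi>1" and "even_blocks \<pi>2"
    and "stable_by (f1 n) \<pi>1" and "stable_by f3 \<pi>1"
    and "stable_by f2 \<pi>2" and "stable_by f3 \<pi>2"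
  shows "tree_root \<pi>1 \<in> tree_vertices \<pi>1 \<pi>2
       \<and> child_parent \<pi>1 \<pi>2 \<subseteq> tree_vertices \<pi>1 \<pi>2 \<times> tree_vertices \<pi>1 \<pi>2
       \<and> (\<forall>v\<in>tree_vertices \<pi>1 \<pi>2. (v, tree_root \<pi>1) \<in> (child_parent \<pi>1 \<pi>2)\<^sup>*)"
proof -
  interpret bicoloured_blocks n \<pi>1 \<pi>2
    using assms(1,3,4,7,9) by unfold_locales
  show ?thesis
    using tree_root_in_vertices child_parent_subset_vertices
      white_reaches_root black_reaches_root
    unfolding tree_vertices_def by blast
qed

end
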